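(* Let $G$ be a connected graph with $n\geq 6$ vertices that has at least one basis forced vertex. Then $|E(G)|\leq \frac{n(n-1)}{2}-4$. Moreover, if $|E(G)|=\frac{n(n-1)}{2}-4$, then the complement $\overline{G}$ is isomorphic to the disjoint union of the path $P_5$ (on 5 vertices) and $n-5$ isolated vertices, and $G$ has exactly two basis forced vertices.
   Context: All graphs are finite and simple. For vertices $u,v$ of a connected graph $G$, $d(u,v)$ is the length of a shortest $u$–$v$ path. A set $R\subseteq V(G)$ is a resolving set if for all distinct $x,y\in V(G)$ there is $r\in R$ with $d(r,x)\neq d(r,y)$. The metric dimension $\dim(G)$ is the minimum cardinality of a resolving set, and a resolving set of cardinality $\dim(G)$ is a metric basis. A vertex is a basis forced vertex if it belongs to every metric basis of $G$. $\overline{G}$ denotes the complement graph of $G$. *)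

theory Defs
  imports Main
begin

definition simple_graph :: "'a set \<Rightarrow> ('a \<Rightarrow> 'a \<Rightarrow> bool) \<Rightarrow> bool" where
  "simple_graph V E \<longleftrightarrow> finite V \<and> (\<forall>x y. E x y \<longrightarrow> x \<in> V \<and> y \<in> V)
     \<and> (\<forall>x y. E x y \<longrightarrow> E y x) \<and> (\<forall>x. \<not> E x x)"

text \<open>A walk given as its vertex list from u to v; its length is length xs - 1.\<close>
definition is_walk :: "'a set \<Rightarrow> ('a \<Rightarrow> 'a \<Rightarrow> bool) \<Rightarrow> 'a list \<Rightarrow> 'a \<Rightarrow> 'a \<Rightarrow> bool" where
  "is_walk V E xs u v \<longleftrightarrow> xs \<noteq> [] \<and> hd xs = u \<and> last xs = v \<and> set xs \<subseteq> V
     \<and> (\<forall>i. Suc i < length xs \<longrightarrow> E (xs ! i) (xs ! Suc i))"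

definition connected_graph :: "'a set \<Rightarrow> ('a \<Rightarrow> 'a \<Rightarrow> bool) \<Rightarrow> bool" where
  "connected_graph V E \<longleftrightarrow> V \<noteq> {} \<and> (\<forall>u\<in>V. \<forall>v\<in>V. \<exists>xs. is_walk V E xs u v)"

definition dist :: "'a set \<Rightarrow> ('a \<Rightarrow> 'a \<Rightarrow> bool) \<Rightarrow> 'a \<Rightarrow> 'a \<Rightarrow> nat" where
  "dist V E u v = (LEAST k. \<exists>xs. is_walk V E xs u v \<and> length xs = Suc k)"

definition resolving_set :: "'a set \<Rightarrow> ('a \<Rightarrow> 'a \<Rightarrow> bool) \<Rightarrow> 'a set \<Rightarrow> bool" where
  "resolving_set V E R \<longleftrightarrow> R \<subseteq> V \<and>
     (\<forall>x\<in>V. \<forall>y\<in>V. x \<noteq> y \<longrightarrow> (\<exists>r\<in>R. dist V E r x \<noteq> dist V E r y))"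

definition metric_dim :: "'a set \<Rightarrow> ('a \<Rightarrow> 'a \<Rightarrow> bool) \<Rightarrow> nat" where
  "metric_dim V E = (LEAST k. \<exists>R. resolving_set V E R \<and> card R = k)"

definition metric_basis :: "'a set \<Rightarrow> ('a \<Rightarrow> 'a \<Rightarrow> bool) \<Rightarrow> 'a set \<Rightarrow> bool" where
  "metric_basis V E R \<longleftrightarrow> resolving_set V E R \<and> card R = metric_dim V E"

definition basis_forced :: "'a set \<Rightarrow> ('a \<Rightarrow> 'a \<Rightarrow> bool) \<Rightarrow> 'a \<Rightarrow> bool" where
  "basis_forced V E v \<longleftrightarrow> v \<in> V \<and> (\<forall>R. metric_basis V E R \<longrightarrow> v \<in> R)"

definition edge_set :: "('a \<Rightarrow> 'a \<Rightarrow> bool) \<Rightarrow> 'a set set" where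
  "edge_set E = {{u, v} | u v. E u v}"

definition compl_graph :: "'a set \<Rightarrow> ('a \<Rightarrow> 'a \<Rightarrow> bool) \<Rightarrow> 'a \<Rightarrow> 'a \<Rightarrow> bool" where
  "compl_graph V E u v \<longleftrightarrow> u \<in> V \<and> v \<in> V \<and> u \<noteq> v \<and> \<not> E u v"

definition graph_iso :: "'a set \<Rightarrow> ('a \<Rightarrow> 'a \<Rightarrow> bool) \<Rightarrow> 'b set \<Rightarrow> ('b \<Rightarrow> 'b \<Rightarrow> bool) \<Rightarrow> bool" where
  "graph_iso V E W F \<longleftrightarrow> (\<exists>f. bij_betw f V W \<and> (\<forall>u\<in>V. \<forall>v\<in>V. E u v \<longleftrightarrow> F (f u) (f v)))"

text \<open>P_5 on vertices 0,...,4 together with isolated vertices 5,...,n-1.\<close>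
definition P5_plus_isolated :: "nat \<Rightarrow> nat \<Rightarrow> bool" where
  "P5_plus_isolated i j \<longleftrightarrow> (j = Suc i \<and> i < 4) \<or> (i = Suc j \<and> j < 4)"

end

theory Submission
  imports Defs
begin

(*
  If the complement H of G has at most four edges and n \<ge> 6, every edge of H has a
  common neighbour in G, so G has diameter two and d(r, x) is 0, 1 or 2 according as
  r = x, r and x are non-adjacent in H, or adjacent in H.  Resolving sets of G are then
  the sets that resolve every pair by H-adjacency.

  Let v be forced and R a metric basis.  Neither R - {v} nor R - {v} + u (u outside R)
  resolves, so there are pairs unresolved by R - {v}; their parts outside R are
  singletons {b} (b looks like v from R - {v}) or pairs {p, q} separated only by v, and
  every vertex outside R is avoided by one of them.  Since v separates the two vertices
  of such a pair, two of these witnesses are disjoint, and a case analysis against the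
  bound of four edges turns two disjoint witnesses into a path P5 of H with v as its
  second vertex.  So H has at least four edges; if exactly four, H is P5 plus isolated
  vertices, the forced vertices are among the two second vertices of the path, and the
  reflection of the path, an automorphism, shows that both are forced.
*)

section \<open>Complements and distances\<close>

lemma finite_edge_set:
  assumes "simple_graph V E"
  shows "finite (edge_set E)"
proof -
  have "edge_set E \<subseteq> Pow V"
    using assms unfolding simple_graph_def edge_set_def by blast
  then show ?thesis
    using assms unfolding simple_graph_def by (meson finite_Pow_iff finite_subset)
qed

lemma simple_graph_compl:
  assumes "simple_graph V E"
  shows "simple_graph V (compl_graph V E)"
  using assms unfolding simple_graph_def compl_graph_def by auto

lemma compl_graph_iff:
  assumes "simple_graph V E" "x \<in> V" "y \<in> V" "x \<noteq> y"
  shows "compl_graph V E x y \<longleftrightarrow> \<not> E x y"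
  using assms unfolding compl_graph_def by blast

lemma card_edge_set_add_compl:
  assumes "simple_graph V E"
  shows "card (edge_set E) + card (edge_set (compl_graph V E)) = card V * (card V - 1) div 2"
proof -
  let ?H = "compl_graph V E"
  have finV: "finite V" using assms unfolding simple_graph_def by blast
  have union: "edge_set E \<union> edge_set ?H = {A. A \<subseteq> V \<and> card A = 2}"
  proof
    show "edge_set E \<union> edge_set ?H \<subseteq> {A. A \<subseteq> V \<and> card A = 2}"
      using assms unfolding edge_set_def compl_graph_def simple_graph_def
      by (auto simp: card_insert_if)
    show "{A. A \<subseteq> V \<and> card A = 2} \<subseteq> edge_set E \<union> edge_set ?H"
    proof
      fix A assume "A \<in> {A. A \<subseteq> V \<and> card A = 2}"
      then obtain x y where "A = {x, y}" "x \<noteq> y" "x \<in> V" "y \<in> V"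
        by (auto simp: card_2_iff)
      then show "A \<in> edge_set E \<union> edge_set ?H"
        unfolding edge_set_def compl_graph_def by blast
    qed
  qed
  have disjoint: "edge_set E \<inter> edge_set ?H = {}"
  proof (rule ccontr)
    assume "edge_set E \<inter> edge_set ?H \<noteq> {}"
    then obtain x y x' y' where "E x y" "?H x' y'" "{x, y} = {x', y'}"
      unfolding edge_set_def by blast
    then show False
      using assms unfolding compl_graph_def simple_graph_def by (auto simp: doubleton_eq_iff)
  qed
  have "card (edge_set E) + card (edge_set ?H) = card {A. A \<subseteq> V \<and> card A = 2}"
    using card_Un_disjoint[OF finite_edge_set[OF assms]
        finite_edge_set[OF simple_graph_compl[OF assms]] disjoint] union by simp
  also have "\<dots> = card V choose 2" using n_subsets[OF finV] .
  finally show ?thesis by (simp add: choose_two)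
qed

lemma is_walk_short:
  assumes "is_walk V E xs x y" "length xs \<le> 2"
  shows "x = y \<or> E x y"
proof -
  have "xs \<noteq> []" "hd xs = x" "last xs = y" "\<forall>i. Suc i < length xs \<longrightarrow> E (xs ! i) (xs ! Suc i)"
    using assms(1) unfolding is_walk_def by blast+
  moreover have "length xs = 1 \<or> length xs = 2"
    using assms(2) \<open>xs \<noteq> []\<close> by (cases xs) (auto simp: le_Suc_eq)
  ultimately show ?thesis
    by (auto simp: length_Suc_conv numeral_2_eq_2)
qed

lemma dist_eqI:
  assumes "is_walk V E xs u v" "length xs = Suc k"
    and "\<And>ys. is_walk V E ys u v \<Longrightarrow> Suc k \<le> length ys"
  shows "dist V E u v = k"
  unfolding dist_def
proof (rule Least_equality)
  show "\<exists>xs. is_walk V E xs u v \<and> length xs = Suc k" using assms(1,2) by blast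
  show "k \<le> m" if "\<exists>ys. is_walk V E ys u v \<and> length ys = Suc m" for m
    using that assms(3) by fastforce
qed

lemma dist_self:
  assumes "x \<in> V"
  shows "dist V E x x = 0"
  by (rule dist_eqI[of _ _ "[x]"]) (use assms in \<open>auto simp: is_walk_def Suc_le_eq\<close>)

lemma dist_adjacent:
  assumes "x \<in> V" "y \<in> V" "x \<noteq> y" "E x y"
  shows "dist V E x y = 1"
proof (rule dist_eqI[of _ _ "[x, y]"])
  show "is_walk V E [x, y] x y" using assms by (auto simp: is_walk_def less_Suc_eq)
  show "Suc 1 \<le> length ys" if "is_walk V E ys x y" for ys
    using that assms(3) unfolding is_walk_def
    by (cases ys) (auto split: if_splits simp: Suc_le_eq)
qed simp

lemma dist_two:
  assumes "x \<in> V" "y \<in> V" "z \<in> V" "x \<noteq> y" "\<not> E x y" "E x z" "E z y"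
  shows "dist V E x y = 2"
proof (rule dist_eqI[of _ _ "[x, z, y]"])
  show "is_walk V E [x, z, y] x y"
    using assms by (auto simp: is_walk_def less_Suc_eq nth_Cons split: nat.splits)
  show "Suc 2 \<le> length ys" if "is_walk V E ys x y" for ys
    using is_walk_short[OF that] assms(4,5) by fastforce
qed simp

section \<open>Metric bases and forced vertices\<close>

lemma metric_dim_le:
  "resolving_set V E R \<Longrightarrow> metric_dim V E \<le> card R"
  unfolding metric_dim_def by (rule Least_le) blast

lemma metric_basis_exists:
  assumes "resolving_set V E S"
  shows "\<exists>R. metric_basis V E R"
proof -
  have "\<exists>R. resolving_set V E R \<and> card R = metric_dim V E"
    unfolding metric_dim_def by (rule LeastI_ex) (use assms in blast)
  then show ?thesis unfolding metric_basis_def by blast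
qed

lemma basis_forced_delete:
  assumes "finite V" "basis_forced V E v" "metric_basis V E R"
  shows "\<not> resolving_set V E (R - {v})"
proof
  assume "resolving_set V E (R - {v})"
  then have "metric_dim V E \<le> card (R - {v})" by (rule metric_dim_le)
  moreover have "v \<in> R" using assms(2,3) unfolding basis_forced_def by blast
  moreover have "finite R"
    using assms(1,3) finite_subset unfolding metric_basis_def resolving_set_def by metis
  ultimately show False
    using assms(3) unfolding metric_basis_def by (metis card_Diff1_less not_le)
qed

lemma basis_forced_exchange:
  assumes "finite V" "basis_forced V E v" "metric_basis V E R" "u \<in> V - R"
  shows "\<not> resolving_set V E (insert u (R - {v}))"
proof
  assume resolving: "resolving_set V E (insert u (R - {v}))"
  have "v \<in> R" using assms(2,3) unfolding basis_forced_def by blast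
  moreover have "finite R"
    using assms(1,3) finite_subset unfolding metric_basis_def resolving_set_def by metis
  ultimately have "card (insert u (R - {v})) = metric_dim V E"
    using assms(3,4) card_Suc_Diff1 unfolding metric_basis_def by fastforce
  then have "v \<in> insert u (R - {v})"
    using resolving assms(2) unfolding basis_forced_def metric_basis_def by blast
  then show False using assms(4) \<open>v \<in> R\<close> by blast
qed

lemma basis_forced_image:
  assumes bij: "bij_betw \<sigma> V V"
    and isometry: "\<And>p q. p \<in> V \<Longrightarrow> q \<in> V \<Longrightarrow> dist V E (\<sigma> p) (\<sigma> q) = dist V E p q"
    and forced: "basis_forced V E x"
  shows "basis_forced V E (\<sigma> x)"
  unfolding basis_forced_def
proof (intro conjI allI impI)
  show "\<sigma> x \<in> V" using forced bij_betwE[OF bij] unfolding basis_forced_def by blast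
  define \<tau> where "\<tau> = the_inv_into V \<sigma>"
  have \<tau>: "bij_betw \<tau> V V" unfolding \<tau>_def by (rule bij_betw_the_inv_into[OF bij])
  have \<sigma>_\<tau>: "\<sigma> (\<tau> r) = r" if "r \<in> V" for r
    unfolding \<tau>_def using that by (simp add: f_the_inv_into_f_bij_betw[OF bij])
  fix R assume basis: "metric_basis V E R"
  then have RV: "R \<subseteq> V" unfolding metric_basis_def resolving_set_def by blast
  have "card R = card (\<tau> ` R)"
    by (rule bij_betw_same_card[OF bij_betw_subset[OF \<tau> RV refl]])
  moreover have "resolving_set V E (\<tau> ` R)"
    unfolding resolving_set_def
  proof (intro conjI ballI impI)
    show "\<tau> ` R \<subseteq> V" using RV bij_betwE[OF \<tau>] by blast
    fix p q assume pq: "p \<in> V" "q \<in> V" "p \<noteq> q"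
    then have "\<sigma> p \<noteq> \<sigma> q" "\<sigma> p \<in> V" "\<sigma> q \<in> V"
      using bij_betw_imp_inj_on[OF bij] bij_betwE[OF bij] unfolding inj_on_def by blast+
    then obtain r where r: "r \<in> R" "dist V E r (\<sigma> p) \<noteq> dist V E r (\<sigma> q)"
      using basis unfolding metric_basis_def resolving_set_def by blast
    then have "\<tau> r \<in> V" "\<sigma> (\<tau> r) = r" using RV bij_betwE[OF \<tau>] \<sigma>_\<tau> by blast+
    then have "dist V E (\<tau> r) p \<noteq> dist V E (\<tau> r) q"
      using isometry[of "\<tau> r" p] isometry[of "\<tau> r" q] pq r(2) by simp
    then show "\<exists>s\<in>\<tau> ` R. dist V E s p \<noteq> dist V E s q" using r(1) by blast
  qed
  ultimately have "metric_basis V E (\<tau> ` R)"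
    using basis unfolding metric_basis_def by metis
  then have "x \<in> \<tau> ` R" using forced unfolding basis_forced_def by blast
  then obtain r where "r \<in> R" "x = \<tau> r" by blast
  then show "\<sigma> x \<in> R" using \<sigma>_\<tau> RV by auto
qed

section \<open>Paths on five vertices\<close>

definition P5_second :: "('a \<Rightarrow> 'a \<Rightarrow> bool) \<Rightarrow> 'a \<Rightarrow> bool" where
  "P5_second H v \<longleftrightarrow> (\<exists>a c d e. distinct [a, v, c, d, e] \<and> H a v \<and> H v c \<and> H c d \<and> H d e)"

lemma P5_second_card_edge_set:
  assumes "simple_graph V H" "P5_second H v"
  shows "4 \<le> card (edge_set H)"
proof -
  obtain a c d e where path: "distinct [a, v, c, d, e]" "H a v" "H v c" "H c d" "H d e"
    using assms(2) unfolding P5_second_def by blast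
  let ?F = "{{a, v}, {v, c}, {c, d}, {d, e}}"
  have sub: "?F \<subseteq> edge_set H" using path unfolding edge_set_def by blast
  have "distinct [{a, v}, {v, c}, {c, d}, {d, e}]"
    using path(1) by (auto simp: doubleton_eq_iff)
  then have "card ?F = 4" using distinct_card by fastforce
  with sub show ?thesis using card_mono[OF finite_edge_set[OF assms(1)]] by metis
qed

lemma P5_second_transfer:
  assumes graph: "simple_graph V H" and "inj_on f V"
    and iso: "\<And>p q. p \<in> V \<Longrightarrow> q \<in> V \<Longrightarrow> H p q \<longleftrightarrow> F (f p) (f q)"
    and "P5_second H x"
  shows "P5_second F (f x)"
proof -
  obtain a c d e where path: "distinct [a, x, c, d, e]" "H a x" "H x c" "H c d" "H d e"
    using assms(4) unfolding P5_second_def by blast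
  then have in_V: "set [a, x, c, d, e] \<subseteq> V" using graph unfolding simple_graph_def by auto
  have "distinct (map f [a, x, c, d, e])"
    unfolding distinct_map using path(1) inj_on_subset[OF assms(2) in_V] by blast
  then have "distinct [f a, f x, f c, f d, f e]" by simp
  moreover have "F (f a) (f x)" "F (f x) (f c)" "F (f c) (f d)" "F (f d) (f e)"
    using path iso in_V by auto
  ultimately show ?thesis unfolding P5_second_def by blast
qed

lemma P5_second_P5_plus_isolated: "P5_second P5_plus_isolated i \<Longrightarrow> i = 1 \<or> i = 3"
  unfolding P5_second_def P5_plus_isolated_def by auto

definition P5_reflect :: "nat \<Rightarrow> nat" where
  "P5_reflect i = (if i < 5 then 4 - i else i)"

lemma P5_plus_isolated_reflect:
  "P5_plus_isolated (P5_reflect i) (P5_reflect j) \<longleftrightarrow> P5_plus_isolated i j"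
  unfolding P5_plus_isolated_def P5_reflect_def by auto

lemma bij_betw_P5_reflect:
  assumes "5 \<le> n"
  shows "bij_betw P5_reflect {0..<n} {0..<n}"
  by (rule bij_betw_byWitness[where f' = P5_reflect]) (use assms in \<open>auto simp: P5_reflect_def\<close>)

lemma labelling_extending_list:
  assumes "finite V" "distinct xs" "set xs \<subseteq> V"
  obtains f where "bij_betw f V {0..<card V}" "\<And>i. i < length xs \<Longrightarrow> f (xs ! i) = i"
proof -
  let ?k = "length xs" and ?n = "card V"
  have nth: "bij_betw ((!) xs) {..<?k} (set xs)" by (rule bij_betw_nth[OF assms(2) refl refl])
  have "card (V - set xs) = card {?k..<?n}"
    using assms by (simp add: card_Diff_subset distinct_card)
  then obtain g where g: "bij_betw g (V - set xs) {?k..<?n}"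
    using finite_same_card_bij assms(1) by blast
  define f where "f p = (if p \<in> set xs then the_inv_into {..<?k} ((!) xs) p else g p)" for p
  have "bij_betw f (set xs) {..<?k}"
    using bij_betw_the_inv_into[OF nth] by (rule bij_betw_cong[THEN iffD1, rotated]) (simp add: f_def)
  moreover have "bij_betw f (V - set xs) {?k..<?n}"
    using g by (rule bij_betw_cong[THEN iffD1, rotated]) (simp add: f_def)
  ultimately have "bij_betw f (set xs \<union> (V - set xs)) ({..<?k} \<union> {?k..<?n})"
    by (rule bij_betw_combine) auto
  moreover have "set xs \<union> (V - set xs) = V" using assms(3) by blast
  moreover have "{..<?k} \<union> {?k..<?n} = {0..<?n}"
    using card_mono[OF assms(1,3)] distinct_card[OF assms(2)] by auto
  ultimately have "bij_betw f V {0..<?n}" by simp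
  moreover have "f (xs ! i) = i" if "i < ?k" for i
    using that the_inv_into_f_f[OF bij_betw_imp_inj_on[OF nth]] unfolding f_def by simp
  ultimately show thesis using that by blast
qed

lemma P5_edges_exhaust:
  assumes graph: "simple_graph V H" and sparse: "card (edge_set H) \<le> 4"
    and path: "distinct [a, b, c, d, e]" "H a b" "H b c" "H c d" "H d e"
  shows "H p q \<longleftrightarrow> {p, q} \<in> {{a, b}, {b, c}, {c, d}, {d, e}}"
proof -
  let ?F = "{{a, b}, {b, c}, {c, d}, {d, e}}"
  have sub: "?F \<subseteq> edge_set H" using path unfolding edge_set_def by blast
  have "distinct [{a, b}, {b, c}, {c, d}, {d, e}]"
    using path(1) by (auto simp: doubleton_eq_iff)
  then have "card (edge_set H) \<le> card ?F" using sparse distinct_card by fastforce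
  then have F: "?F = edge_set H"
    using card_seteq[OF finite_edge_set[OF graph] sub] by blast
  have "H p q \<longleftrightarrow> {p, q} \<in> edge_set H"
    using graph unfolding edge_set_def simple_graph_def by (auto simp: doubleton_eq_iff)
  then show ?thesis unfolding F .
qed

lemma graph_iso_P5_plus_isolated:
  assumes graph: "simple_graph V H" and sparse: "card (edge_set H) \<le> 4"
    and "P5_second H b"
  shows "graph_iso V H {0..<card V} P5_plus_isolated"
proof -
  obtain a c d e where path: "distinct [a, b, c, d, e]" "H a b" "H b c" "H c d" "H d e"
    using assms(3) unfolding P5_second_def by blast
  note edges = P5_edges_exhaust[OF graph sparse path]
  have finite: "finite V" using graph unfolding simple_graph_def by blast
  have in_V: "set [a, b, c, d, e] \<subseteq> V" using path graph unfolding simple_graph_def by auto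
  obtain f where f: "bij_betw f V {0..<card V}"
    "\<And>i. i < length [a, b, c, d, e] \<Longrightarrow> f ([a, b, c, d, e] ! i) = i"
    using labelling_extending_list[OF finite path(1) in_V] by blast
  have labels: "f a = 0" "f b = 1" "f c = 2" "f d = 3" "f e = 4"
    using f(2)[of 0] f(2)[of 1] f(2)[of 2] f(2)[of 3] f(2)[of 4] by simp_all
  have unlabelled: "4 < f p" if "p \<in> V" "p \<notin> {a, b, c, d, e}" for p
  proof (rule ccontr)
    assume "\<not> 4 < f p"
    then have "f p \<in> {f a, f b, f c, f d, f e}" using labels by auto
    then show False
      using that bij_betw_imp_inj_on[OF f(1)] in_V
      unfolding inj_on_def by auto
  qed
  have "H p q \<longleftrightarrow> P5_plus_isolated (f p) (f q)" if "p \<in> V" "q \<in> V" for p q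
  proof (cases "p \<in> {a, b, c, d, e} \<and> q \<in> {a, b, c, d, e}")
    case True
    have "distinct [e, d, c, b, a]" using path(1) by auto
    with True path(1) show ?thesis
      unfolding edges P5_plus_isolated_def
      by (elim conjE insertE emptyE) (simp_all add: labels doubleton_eq_iff)
  next
    case False
    then have "\<not> H p q" unfolding edges by (auto simp: doubleton_eq_iff)
    moreover have "\<not> P5_plus_isolated (f p) (f q)"
      using False unlabelled that unfolding P5_plus_isolated_def by fastforce
    ultimately show ?thesis by simp
  qed
  then show ?thesis using f(1) unfolding graph_iso_def by blast
qed

lemma P5_reflection_automorphism:
  assumes f: "bij_betw f V {0..<card V}" and five: "5 \<le> card V"
    and iso: "\<And>p q. p \<in> V \<Longrightarrow> q \<in> V \<Longrightarrow> H p q \<longleftrightarrow> P5_plus_isolated (f p) (f q)"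
  obtains \<sigma> where "bij_betw \<sigma> V V" "\<And>p q. p \<in> V \<Longrightarrow> q \<in> V \<Longrightarrow> H (\<sigma> p) (\<sigma> q) = H p q"
    "\<And>p. p \<in> V \<Longrightarrow> f (\<sigma> p) = P5_reflect (f p)"
proof -
  define \<sigma> where "\<sigma> = the_inv_into V f \<circ> P5_reflect \<circ> f"
  have bij: "bij_betw \<sigma> V V"
    unfolding \<sigma>_def o_assoc[symmetric]
    by (rule bij_betw_trans[OF bij_betw_trans[OF f bij_betw_P5_reflect[OF five]]
          bij_betw_the_inv_into[OF f]])
  have f_\<sigma>: "f (\<sigma> p) = P5_reflect (f p)" if "p \<in> V" for p
  proof -
    have "P5_reflect (f p) \<in> {0..<card V}"
      using bij_betwE[OF bij_betw_P5_reflect[OF five]] bij_betwE[OF f] that by blast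
    then show ?thesis unfolding \<sigma>_def by (simp add: f_the_inv_into_f_bij_betw[OF f])
  qed
  have "H (\<sigma> p) (\<sigma> q) = H p q" if "p \<in> V" "q \<in> V" for p q
  proof -
    have "\<sigma> p \<in> V" "\<sigma> q \<in> V" using bij_betwE[OF bij] that by blast+
    then have "H (\<sigma> p) (\<sigma> q) \<longleftrightarrow> P5_plus_isolated (f (\<sigma> p)) (f (\<sigma> q))" by (rule iso)
    also have "\<dots> \<longleftrightarrow> P5_plus_isolated (f p) (f q)"
      using that by (simp add: f_\<sigma> P5_plus_isolated_reflect)
    also have "\<dots> \<longleftrightarrow> H p q" using iso[OF that] by simp
    finally show ?thesis .
  qed
  with bij f_\<sigma> that show thesis by blast
qed

section \<open>A forced vertex lies on a path on five vertices\<close>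

lemma disjoint_members_exist:
  fixes F :: "'a set set" and P :: "'a \<Rightarrow> bool"
  assumes "F \<noteq> {}"
    and members: "\<And>W. W \<in> F \<Longrightarrow> W \<noteq> {} \<and> inj_on P W"
    and avoid: "\<And>u. u \<in> \<Union>F \<Longrightarrow> \<exists>W\<in>F. u \<notin> W"
  shows "\<exists>W1\<in>F. \<exists>W2\<in>F. W1 \<inter> W2 = {}"
proof (rule ccontr)
  assume meet: "\<not> ?thesis"
  obtain W1 a where W1: "W1 \<in> F" "a \<in> W1" using assms(1) members by blast
  obtain W2 where W2: "W2 \<in> F" "a \<notin> W2" using avoid W1 by blast
  obtain b where b: "b \<in> W1" "b \<in> W2" using meet W1 W2 by blast
  obtain W3 where W3: "W3 \<in> F" "b \<notin> W3" using avoid W2 b by blast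
  obtain c where c: "c \<in> W2" "c \<in> W3" using meet W2 W3 by blast
  obtain d where d: "d \<in> W1" "d \<in> W3" using meet W1 W3 by blast
  have "P a \<noteq> P b" "P d \<noteq> P b" "P c \<noteq> P b"
    using members[OF W1(1)] members[OF W2(1)] W1 W2 W3 b c d
    unfolding inj_on_def by metis+
  then have "P c = P d" by blast
  then have "c = d" using members[OF W3(1)] c d unfolding inj_on_def by blast
  moreover have "P c = P a" using \<open>P a \<noteq> P b\<close> \<open>P c \<noteq> P b\<close> by blast
  ultimately have "c = a" using members[OF W1(1)] W1 d unfolding inj_on_def by blast
  then show False using W2 c by blast
qed

definition adj_resolving :: "'a set \<Rightarrow> ('a \<Rightarrow> 'a \<Rightarrow> bool) \<Rightarrow> 'a set \<Rightarrow> bool" where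
  "adj_resolving V H R \<longleftrightarrow> R \<subseteq> V \<and>
     (\<forall>x\<in>V. \<forall>y\<in>V. x \<noteq> y \<longrightarrow> (\<exists>r\<in>R. r = x \<or> r = y \<or> H r x \<noteq> H r y))"

text \<open>The hypotheses are what a forced vertex \<open>v\<close> and a metric basis \<open>R \<ni> v\<close> provide
  when distances are determined by adjacency in the complement \<open>H\<close>, as in
  \<open>sparse_complement.resolving_set_iff\<close> below.\<close>

locale adj_forced =
  fixes V :: "'a set" and H :: "'a \<Rightarrow> 'a \<Rightarrow> bool" and R :: "'a set" and v :: 'a
  assumes graph: "simple_graph V H"
    and at_most_four_edges: "card (edge_set H) \<le> 4"
    and resolving: "adj_resolving V H R"
    and v_in_R: "v \<in> R"
    and delete: "\<not> adj_resolving V H (R - {v})"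
    and exchange: "\<And>u. u \<in> V - R \<Longrightarrow> \<not> adj_resolving V H (insert u (R - {v}))"
begin

lemma sym: "H x y \<Longrightarrow> H y x"
  using graph unfolding simple_graph_def by blast

lemma R_subset: "R \<subseteq> V"
  using resolving unfolding adj_resolving_def by blast

lemma no_five_edges:
  assumes "H a1 b1" "H a2 b2" "H a3 b3" "H a4 b4" "H a5 b5"
    and "distinct [{a1, b1}, {a2, b2}, {a3, b3}, {a4, b4}, {a5, b5}]"
  shows False
proof -
  let ?F = "{{a1, b1}, {a2, b2}, {a3, b3}, {a4, b4}, {a5, b5}}"
  have "?F \<subseteq> edge_set H" using assms unfolding edge_set_def by blast
  moreover have "card ?F = 5" using distinct_card[OF assms(6)] by simp
  ultimately have "5 \<le> card (edge_set H)"
    using card_mono[OF finite_edge_set[OF graph]] by metis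
  then show False using at_most_four_edges by simp
qed

lemma four_edges_exhaust:
  assumes "H a1 b1" "H a2 b2" "H a3 b3" "H a4 b4"
    and "distinct [{a1, b1}, {a2, b2}, {a3, b3}, {a4, b4}]" and "H p q"
  shows "{p, q} \<in> {{a1, b1}, {a2, b2}, {a3, b3}, {a4, b4}}"
proof -
  let ?F = "{{a1, b1}, {a2, b2}, {a3, b3}, {a4, b4}}"
  have sub: "?F \<subseteq> edge_set H" using assms unfolding edge_set_def by blast
  moreover have "card ?F = 4" using distinct_card[OF assms(5)] by simp
  ultimately have "?F = edge_set H"
    using card_seteq[OF finite_edge_set[OF graph]] at_most_four_edges by metis
  moreover have "{p, q} \<in> edge_set H" using assms(6) unfolding edge_set_def by blast
  ultimately show ?thesis by simp
qed

lemma outside_separated: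
  assumes "x \<in> V - R" "y \<in> V - R" "x \<noteq> y"
  obtains r where "r \<in> R" "H r x \<noteq> H r y"
  using resolving assms unfolding adj_resolving_def by blast

definition attached :: "'a \<Rightarrow> bool" where
  "attached x \<longleftrightarrow> (\<exists>r\<in>R - {v}. H r x)"

text \<open>A pair unresolved by \<open>R - {v}\<close> is resolved by \<open>v\<close>: either it contains \<open>v\<close>
  and its other vertex is a \<open>v_twin\<close>, or it is a \<open>v_split\<close> pair outside \<open>R\<close>, listed
  with the neighbour of \<open>v\<close> first.  A \<open>witness\<close> is the part of such a pair outside \<open>R\<close>.\<close>

definition v_twin :: "'a \<Rightarrow> bool" where
  "v_twin b \<longleftrightarrow> b \<in> V - R \<and> (\<forall>r\<in>R - {v}. H r b = H r v)"

definition v_split :: "'a \<Rightarrow> 'a \<Rightarrow> bool" where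
  "v_split p q \<longleftrightarrow> p \<in> V - R \<and> q \<in> V - R \<and> (\<forall>r\<in>R - {v}. H r p = H r q) \<and> H v p \<and> \<not> H v q"

definition witness :: "'a set \<Rightarrow> bool" where
  "witness W \<longleftrightarrow> (\<exists>b. v_twin b \<and> W = {b}) \<or> (\<exists>p q. v_split p q \<and> W = {p, q})"

lemma unresolved_pair_cases:
  assumes "x \<in> V" "y \<in> V" "x \<noteq> y"
    and unresolved: "\<forall>r\<in>R - {v}. r \<noteq> x \<and> r \<noteq> y \<and> H r x = H r y"
  shows "(x = v \<and> v_twin y) \<or> (y = v \<and> v_twin x) \<or> v_split x y \<or> v_split y x"
proof -
  obtain r where r: "r \<in> R" "r = x \<or> r = y \<or> H r x \<noteq> H r y"
    using resolving assms(1-3) unfolding adj_resolving_def by blast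
  then have "r = v" using unresolved by blast
  have outside: "z \<in> V - R" if "z \<in> {x, y}" "z \<noteq> v" for z
    using that assms(1,2) unresolved by blast
  have agree: "\<forall>r\<in>R - {v}. H r x = H r y" using unresolved by blast
  consider "x = v" | "y = v" | "x \<noteq> v" "y \<noteq> v" "H v x" "\<not> H v y"
    | "x \<noteq> v" "y \<noteq> v" "H v y" "\<not> H v x"
    using r \<open>r = v\<close> by blast
  then show ?thesis
  proof cases
    case 1
    then have "y \<in> V - R" using outside[of y] assms(3) by blast
    then show ?thesis using 1 agree unfolding v_twin_def by simp
  next
    case 2
    then have "x \<in> V - R" using outside[of x] assms(3) by blast
    then show ?thesis using 2 agree unfolding v_twin_def by simp
  next
    case 3
    then have "x \<in> V - R" "y \<in> V - R" using outside by blast+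
    then show ?thesis using 3 agree unfolding v_split_def by simp
  next
    case 4
    then have "x \<in> V - R" "y \<in> V - R" using outside by blast+
    then show ?thesis using 4 agree unfolding v_split_def by simp
  qed
qed

lemma witness_exists: "\<exists>W. witness W"
proof -
  obtain x y where "x \<in> V" "y \<in> V" "x \<noteq> y" "\<forall>r\<in>R - {v}. r \<noteq> x \<and> r \<noteq> y \<and> H r x = H r y"
    using delete R_subset unfolding adj_resolving_def by blast
  from unresolved_pair_cases[OF this] show ?thesis
    unfolding witness_def by (elim disjE conjE) blast+
qed

lemma exchange_cases:
  assumes "u \<in> V - R"
  obtains b where "v_twin b" "b \<noteq> u" "H u b = H u v"
    | p q where "v_split p q" "p \<noteq> u" "q \<noteq> u" "H u p = H u q"
proof -
  obtain x y where xy: "x \<in> V" "y \<in> V" "x \<noteq> y"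
      "\<forall>r\<in>insert u (R - {v}). r \<noteq> x \<and> r \<noteq> y \<and> H r x = H r y"
    using exchange[OF assms] assms R_subset unfolding adj_resolving_def by blast
  then have "u \<noteq> x" "u \<noteq> y" "H u x = H u y" by auto
  with unresolved_pair_cases[OF xy(1-3)] xy(4) that show thesis by fastforce
qed

lemma witness_avoiding:
  assumes "u \<in> V - R"
  shows "\<exists>W. witness W \<and> u \<notin> W"
  using exchange_cases[OF assms] unfolding witness_def by (metis empty_iff insertE)

lemma witness_subset: "witness W \<Longrightarrow> W \<subseteq> V - R"
  unfolding witness_def v_twin_def v_split_def by blast

lemma twins_separated:
  assumes "v_twin b" "v_twin b'" "b \<noteq> b'"
  shows "H v b \<noteq> H v b'"
proof
  assume same: "H v b = H v b'"
  obtain r where "r \<in> R" "H r b \<noteq> H r b'"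
    using outside_separated assms unfolding v_twin_def by blast
  then show False using same assms(1,2) unfolding v_twin_def by (cases "r = v") auto
qed

lemma P5_secondI:
  "distinct [a, v, c, d, e] \<Longrightarrow> H a v \<Longrightarrow> H v c \<Longrightarrow> H c d \<Longrightarrow> H d e \<Longrightarrow> P5_second H v"
  unfolding P5_second_def by blast

text \<open>The path \<open>a - v - p - r - q\<close>.\<close>

lemma split_extension_P5:
  assumes "v_split p q" "a \<in> V - R" "H v a" "a \<notin> {p, q}" "r \<in> R - {v}" "H r q"
  shows "P5_second H v"
proof (rule P5_secondI)
  have "H r p" using assms(1,5,6) unfolding v_split_def by blast
  then show "H p r" by (rule sym)
  show "H a v" using assms(3) by (rule sym)
  show "H v p" "H r q" using assms(1,6) unfolding v_split_def by blast+
  show "distinct [a, v, p, r, q]"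
    using assms v_in_R unfolding v_split_def by auto
qed

lemma two_splits_P5:
  assumes "v_split x1 y1" "v_split x2 y2" "{x1, y1} \<inter> {x2, y2} = {}"
  shows "P5_second H v"
proof -
  have x: "x1 \<in> V - R" "x2 \<in> V - R" "H v x1" "H v x2"
    and y: "y1 \<in> V - R" "y2 \<in> V - R" "\<not> H v y1" "\<not> H v y2"
    using assms(1,2) unfolding v_split_def by blast+
  obtain r where r: "r \<in> R" "H r y1 \<noteq> H r y2"
    using outside_separated[OF y(1,2)] assms(3) by blast
  then have "r \<in> R - {v}" using y(3,4) by blast
  show ?thesis
  proof (cases "H r y2")
    case True
    show ?thesis
      by (rule split_extension_P5[OF assms(2) x(1,3) _ \<open>r \<in> R - {v}\<close> True]) (use assms(3) in blast)
  next
    case False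
    then have "H r y1" using r(2) by blast
    show ?thesis
      by (rule split_extension_P5[OF assms(1) x(2,4) _ \<open>r \<in> R - {v}\<close> \<open>H r y1\<close>]) (use assms(3) in blast)
  qed
qed

lemma twins_linked_False:
  assumes "v_twin w1" "v_twin w2" "H v w1" "\<not> H v w2" "s \<in> R - {v}" "H s v"
  shows False
proof -
  have w: "w1 \<in> V - R" "w2 \<in> V - R" "w1 \<noteq> w2"
    using assms(1-4) unfolding v_twin_def by blast+
  have "H s w1" "H s w2" using assms(1,2,5,6) unfolding v_twin_def by blast+
  have "distinct [v, s, w1, w2]" using w assms(5) v_in_R by auto
  then have "distinct [{v, w1}, {v, s}, {s, w1}, {s, w2}]" by (auto simp: doubleton_eq_iff)
  note edges = four_edges_exhaust[OF assms(3) sym[OF assms(6)] \<open>H s w1\<close> \<open>H s w2\<close> this]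
  show False
  proof (cases rule: exchange_cases[OF \<open>w1 \<in> V - R\<close>])
    case (1 b)
    then have "H w1 b" using sym[OF assms(3)] by blast
    then show False
      using edges[OF \<open>H w1 b\<close>] 1 w assms(5) v_in_R unfolding v_twin_def
      by (auto simp: doubleton_eq_iff)
  next
    case (2 p q)
    then have "H v p" "p \<notin> R" unfolding v_split_def by blast+
    then show False
      using edges[OF \<open>H v p\<close>] 2 w assms(5) by (auto simp: doubleton_eq_iff)
  qed
qed

lemma twins_adjacent_False:
  assumes "v_twin w1" "v_twin w2" "H v w1" "\<not> H v w2" "\<not> attached v" "H w1 w2"
  shows False
proof -
  have w: "w1 \<in> V - R" "w2 \<in> V - R" "w1 \<noteq> w2"
    using assms(1-4) unfolding v_twin_def by blast+
  have detached: "\<not> H r w1" "\<not> H r w2" if "r \<in> R - {v}" for r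
    using assms(1,2,5) that unfolding v_twin_def attached_def by blast+
  show False
  proof (cases rule: exchange_cases[OF \<open>w2 \<in> V - R\<close>])
    case (1 b)
    then have "H v b" using twins_separated[OF 1(1) assms(2)] assms(4) by blast
    moreover have "b \<noteq> w1" using 1(3) assms(4,6) sym by blast
    ultimately show False using twins_separated[OF 1(1) assms(1)] assms(3) by blast
  next
    case (2 p q)
    then have pq: "p \<in> V - R" "q \<in> V - R" "H v p" "\<not> H v q"
      and agree: "\<forall>r\<in>R - {v}. H r p = H r q"
      unfolding v_split_def by blast+
    show False
    proof (cases "p = w1")
      case True
      obtain r where r: "r \<in> R" "H r q \<noteq> H r w2"
        using outside_separated[OF pq(2) w(2) 2(3)] by blast
      then show False using True agree detached pq(4) assms(4) by (cases "r = v") auto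
    next
      case False
      obtain r where r: "r \<in> R" "H r p \<noteq> H r w1"
        using outside_separated[OF pq(1) w(1) False] by blast
      then have "r \<in> R - {v}" using pq(3) assms(3) by blast
      then have "H r p" "H r q" using r(2) detached agree by blast+
      then have "q \<noteq> w1" using detached \<open>r \<in> R - {v}\<close> by blast
      have "distinct [v, r, w1, w2, p, q]"
        using w pq 2(2,3) False \<open>q \<noteq> w1\<close> \<open>r \<in> R - {v}\<close> v_in_R by auto
      then have "distinct [{v, w1}, {w1, w2}, {v, p}, {r, p}, {r, q}]"
        by (auto simp: doubleton_eq_iff)
      then show False
        using no_five_edges[OF assms(3,6) pq(3) \<open>H r p\<close> \<open>H r q\<close>] by blast
    qed
  qed
qed

lemma two_twins_oriented_P5:
  assumes "v_twin w1" "v_twin w2" "H v w1" "\<not> H v w2"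
  shows "P5_second H v"
proof (cases "attached v")
  case True
  then obtain s where "s \<in> R - {v}" "H s v" unfolding attached_def using sym by blast
  then show ?thesis using twins_linked_False[OF assms] by blast
next
  case False
  have w1: "w1 \<in> V - R" using assms(1) unfolding v_twin_def by blast
  show ?thesis
  proof (cases rule: exchange_cases[OF w1])
    case (1 b)
    then have "H w1 b" using sym[OF assms(3)] by blast
    show ?thesis
    proof (cases "b = w2")
      case True
      then show ?thesis using twins_adjacent_False[OF assms False] \<open>H w1 b\<close> by blast
    next
      case False
      then show ?thesis
        using twins_separated[OF 1(1) assms(1)] twins_separated[OF 1(1) assms(2)] 1(2) assms(3,4)
        by blast
    qed
  next
    case (2 p q)
    then have p: "p \<in> V - R" "H v p" unfolding v_split_def by blast+
    obtain r where r: "r \<in> R" "H r p \<noteq> H r w1"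
      using outside_separated[OF p(1) w1 2(2)] by blast
    then have "r \<in> R - {v}" using p(2) assms(3) by blast
    moreover have "\<not> H r w1"
      using calculation assms(1) False unfolding v_twin_def attached_def by blast
    ultimately have "H r q" using r(2) 2(1) unfolding v_split_def by blast
    then show ?thesis
      using split_extension_P5[OF 2(1) w1 assms(3) _ \<open>r \<in> R - {v}\<close>] 2(2,3) by blast
  qed
qed

lemma two_twins_P5:
  assumes "v_twin w1" "v_twin w2" "w1 \<noteq> w2"
  shows "P5_second H v"
  using twins_separated[OF assms] two_twins_oriented_P5[OF assms(1,2)]
    two_twins_oriented_P5[OF assms(2,1)] by blast

lemma split_twin_adjacent_False:
  assumes "v_split x y" "v_twin w" "w \<notin> {x, y}" "r \<in> R - {v}" "H r y"
    and "\<not> H v w" "H x w"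
  shows False
proof -
  have xy: "x \<in> V - R" "y \<in> V - R" "H v x" "\<not> H v y" "H r x"
    using assms(1,4,5) unfolding v_split_def by blast+
  have w: "w \<in> V - R" using assms(2) unfolding v_twin_def by blast
  have "distinct [v, r, x, y, w]" using xy w assms(3,4) v_in_R by auto
  then have "distinct [{v, x}, {r, x}, {r, y}, {x, w}]" by (auto simp: doubleton_eq_iff)
  note edges = four_edges_exhaust[OF xy(3,5) assms(5,7) this]
  show False
  proof (cases rule: exchange_cases[OF w])
    case (1 b)
    then have "H v b" using twins_separated[OF 1(1) assms(2)] assms(6) by blast
    then have "b = x"
      using edges[OF \<open>H v b\<close>] 1(1) xy(1) assms(4) v_in_R unfolding v_twin_def
      by (auto simp: doubleton_eq_iff)
    then show False using 1(3) assms(6,7) sym by blast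
  next
    case (2 p q)
    then have "H v p" "p \<noteq> q" unfolding v_split_def by blast+
    then have "p = x"
      using edges[OF \<open>H v p\<close>] 2(1) xy(1) assms(4) v_in_R unfolding v_split_def
      by (auto simp: doubleton_eq_iff)
    then have "H w q" using 2(4) assms(7) sym by blast
    then have "q = x"
      using edges[OF \<open>H w q\<close>] 2(1,3) w assms(3,4) unfolding v_split_def
      by (auto simp: doubleton_eq_iff)
    then show False using \<open>p = x\<close> \<open>p \<noteq> q\<close> by blast
  qed
qed

lemma split_twin_attached_P5:
  assumes "v_split x y" "v_twin w" "w \<notin> {x, y}" "r \<in> R - {v}" "H r y"
  shows "P5_second H v"
proof -
  have xy: "x \<in> V - R" "y \<in> V - R" "H v x" "\<not> H v y" "H r x"
    using assms(1,4,5) unfolding v_split_def by blast+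
  have w: "w \<in> V - R" using assms(2) unfolding v_twin_def by blast
  show ?thesis
  proof (cases "H v w")
    case True
    then show ?thesis by (rule split_extension_P5[OF assms(1) w _ assms(3-5)])
  next
    case nonadjacent: False
    show ?thesis
    proof (cases rule: exchange_cases[OF xy(1)])
      case (1 b)
      then have "H x b" using sym[OF xy(3)] by blast
      show ?thesis
      proof (cases "b = w")
        case True
        then show ?thesis using split_twin_adjacent_False[OF assms nonadjacent] \<open>H x b\<close> by blast
      next
        case False
        then have "H v b" using twins_separated[OF 1(1) assms(2)] nonadjacent by blast
        have "distinct [v, r, x, y, b]" using xy 1 assms(4) \<open>H v b\<close> v_in_R
          unfolding v_twin_def by auto
        then have "distinct [{v, x}, {r, x}, {r, y}, {v, b}, {x, b}]"
          by (auto simp: doubleton_eq_iff)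
        then show ?thesis using no_five_edges[OF xy(3,5) assms(5) \<open>H v b\<close> \<open>H x b\<close>] by blast
      qed
    next
      case (2 p q)
      then have "p \<in> V - R" "H v p" unfolding v_split_def by blast+
      moreover have "p \<notin> {x, y}" using 2(2) \<open>H v p\<close> xy(4) by blast
      ultimately show ?thesis using split_extension_P5[OF assms(1) _ _ _ assms(4,5)] by blast
    qed
  qed
qed

lemma twin_attached_if_split_detached:
  assumes "v_split x y" "v_twin w" "w \<notin> {x, y}" "\<not> attached y"
  shows "attached w"
proof -
  have xy: "x \<in> V - R" "y \<in> V - R" "H v x" "\<not> H v y"
    using assms(1) unfolding v_split_def by blast+
  have detached: "\<not> H r x" "\<not> H r y" if "r \<in> R - {v}" for r
    using assms(1,4) that unfolding v_split_def attached_def by blast+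
  have w: "w \<in> V - R" using assms(2) unfolding v_twin_def by blast
  obtain r1 where r1: "r1 \<in> R" "H r1 w \<noteq> H r1 y"
    using outside_separated[OF w xy(2)] assms(3) by blast
  show ?thesis
  proof (cases "r1 = v")
    case False
    then show ?thesis using r1 detached unfolding attached_def by blast
  next
    case True
    then have "H v w" using r1(2) xy(4) by blast
    obtain r2 where r2: "r2 \<in> R" "H r2 w \<noteq> H r2 x"
      using outside_separated[OF w xy(1)] assms(3) by blast
    then have "r2 \<noteq> v" using \<open>H v w\<close> xy(3) by blast
    then show ?thesis using r2 detached unfolding attached_def by blast
  qed
qed

lemma split_twin_detached_adjacent_False:
  assumes "v_split x y" "v_twin w" "w \<notin> {x, y}" "s \<in> R - {v}" "H s w" "H x w"
  shows False
proof -
  have x: "x \<in> V - R" "H v x" using assms(1) unfolding v_split_def by blast+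
  have w: "w \<in> V - R" "H s v" using assms(2,4,5) unfolding v_twin_def by auto
  have "distinct [v, s, x, w]" using x w assms(3,4) v_in_R by auto
  then have "distinct [{x, v}, {v, s}, {s, w}, {x, w}]" by (auto simp: doubleton_eq_iff)
  note edges = four_edges_exhaust[OF sym[OF x(2)] sym[OF w(2)] assms(5,6) this]
  show False
  proof (cases rule: exchange_cases[OF w(1)])
    case (1 b)
    then have "H s b" using assms(4) w(2) unfolding v_twin_def by blast
    then show False
      using edges[OF \<open>H s b\<close>] 1 x w assms(4) v_in_R unfolding v_twin_def
      by (auto simp: doubleton_eq_iff)
  next
    case (2 p q)
    then have "H v p" "p \<noteq> q" "p \<notin> R" "q \<notin> R" unfolding v_split_def by blast+
    then have "p = x"
      using edges[OF \<open>H v p\<close>] x w assms(4) v_in_R by (auto simp: doubleton_eq_iff)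
    then have "H w q" using 2(4) assms(6) sym by blast
    then have "q = x"
      using edges[OF \<open>H w q\<close>] \<open>q \<notin> R\<close> x w assms(4) v_in_R by (auto simp: doubleton_eq_iff)
    then show False using \<open>p = x\<close> \<open>p \<noteq> q\<close> by blast
  qed
qed

lemma split_twin_detached_split_False:
  assumes "v_split x y" "v_twin w" "w \<notin> {x, y}" "\<not> attached y" "s \<in> R - {v}" "H s w"
    and "v_split p q" "x \<notin> {p, q}"
  shows False
proof -
  have x: "x \<in> V - R" "H v x" using assms(1) unfolding v_split_def by blast+
  have detached: "\<not> H r x" if "r \<in> R - {v}" for r
    using assms(1,4) that unfolding v_split_def attached_def by blast
  have w: "w \<in> V - R" "H s v" using assms(2,5,6) unfolding v_twin_def by auto
  have p: "p \<in> V - R" "q \<in> V - R" "H v p" "p \<noteq> q" "\<forall>r\<in>R - {v}. H r p = H r q"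
    using assms(7) unfolding v_split_def by auto
  show False
  proof (cases "p = w")
    case True
    have "distinct [v, s, x, w]" using x w assms(3,5) v_in_R by auto
    then have "distinct [{x, v}, {v, s}, {s, w}, {v, w}]" by (auto simp: doubleton_eq_iff)
    moreover have "H s q" using p(5) assms(5,6) True by blast
    ultimately show False
      using four_edges_exhaust[OF sym[OF x(2)] sym[OF w(2)] assms(6)] p True assms(5) v_in_R
      by (auto simp: doubleton_eq_iff)
  next
    case False
    have "distinct [v, s, x, w, p]" using x w p False assms(3,5,8) v_in_R by auto
    then have "distinct [{x, v}, {v, s}, {s, w}, {v, p}]" by (auto simp: doubleton_eq_iff)
    note edges = four_edges_exhaust[OF sym[OF x(2)] sym[OF w(2)] assms(6) p(3) this]
    obtain r where r: "r \<in> R" "H r x \<noteq> H r p"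
      using outside_separated[OF x(1) p(1)] assms(8) by blast
    then have "r \<in> R - {v}" using x(2) p(3) by blast
    then have "H r p" using r(2) detached by blast
    then show False
      using edges[OF \<open>H r p\<close>] \<open>r \<in> R - {v}\<close> x w p False v_in_R by (auto simp: doubleton_eq_iff)
  qed
qed

lemma split_twin_detached_False:
  assumes "v_split x y" "v_twin w" "w \<notin> {x, y}" "\<not> attached y"
  shows False
proof -
  obtain s where s: "s \<in> R - {v}" "H s w"
    using twin_attached_if_split_detached[OF assms] unfolding attached_def by blast
  have x: "x \<in> V - R" "H v x" using assms(1) unfolding v_split_def by blast+
  have w: "w \<in> V - R" "H s v" using assms(2) s unfolding v_twin_def by auto
  show False
  proof (cases rule: exchange_cases[OF x(1)])
    case (1 b)
    then have "H x b" "H s b" using sym[OF x(2)] w(2) s(1) unfolding v_twin_def by auto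
    show False
    proof (cases "b = w")
      case True
      then show False
        using split_twin_detached_adjacent_False[OF assms(1-3) s] \<open>H x b\<close> by blast
    next
      case False
      have "distinct [v, s, x, w, b]" using x w s 1 False assms(3) v_in_R
        unfolding v_twin_def by auto
      then have "distinct [{x, v}, {v, s}, {s, w}, {s, b}, {x, b}]"
        by (auto simp: doubleton_eq_iff)
      then show False
        using no_five_edges[OF sym[OF x(2)] sym[OF w(2)] s(2) \<open>H s b\<close> \<open>H x b\<close>] by blast
    qed
  next
    case (2 p q)
    then show False using split_twin_detached_split_False[OF assms s] by blast
  qed
qed

lemma split_twin_P5:
  assumes "v_split x y" "v_twin w" "w \<notin> {x, y}"
  shows "P5_second H v"
proof (cases "attached y")
  case True
  then obtain r where "r \<in> R - {v}" "H r y" unfolding attached_def by blast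
  then show ?thesis using split_twin_attached_P5[OF assms] by blast
next
  case False
  then show ?thesis using split_twin_detached_False[OF assms] by blast
qed

lemma disjoint_witnesses_P5:
  assumes "witness W1" "witness W2" "W1 \<inter> W2 = {}"
  shows "P5_second H v"
  using assms two_twins_P5 two_splits_P5 split_twin_P5 unfolding witness_def
  by (elim disjE exE conjE) (simp_all, blast+)

theorem P5_second_v: "P5_second H v"
proof -
  have "\<exists>W1\<in>Collect witness. \<exists>W2\<in>Collect witness. W1 \<inter> W2 = {}"
  proof (rule disjoint_members_exist[where P = "H v"])
    show "Collect witness \<noteq> {}" using witness_exists by blast
    show "W \<noteq> {} \<and> inj_on (H v) W" if "W \<in> Collect witness" for W
      using that unfolding witness_def v_split_def inj_on_def by auto
    show "\<exists>W\<in>Collect witness. u \<notin> W" if "u \<in> \<Union>(Collect witness)" for u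
      using that witness_subset witness_avoiding by blast
  qed
  then show ?thesis using disjoint_witnesses_P5 by blast
qed

end

section \<open>Graphs whose complement has at most four edges\<close>

locale sparse_complement =
  fixes V :: "'a set" and E :: "'a \<Rightarrow> 'a \<Rightarrow> bool"
  assumes graph: "simple_graph V E"
    and six_vertices: "6 \<le> card V"
    and sparse: "card (edge_set (compl_graph V E)) \<le> 4"
begin

abbreviation H :: "'a \<Rightarrow> 'a \<Rightarrow> bool" where
  "H \<equiv> compl_graph V E"

lemma finite_V: "finite V"
  using graph unfolding simple_graph_def by blast

text \<open>Every vertex other than \<open>x, y\<close> that is not a common neighbour lies on an
  edge of the complement through \<open>x\<close> or \<open>y\<close>, and these are too few.\<close>

lemma compl_edge_common_neighbour:
  assumes "H x y"
  obtains z where "z \<in> V" "E x z" "E z y"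
proof -
  have xy: "x \<in> V" "y \<in> V" "x \<noteq> y" using assms unfolding compl_graph_def by blast+
  have "\<exists>z\<in>V. E x z \<and> E z y"
  proof (rule ccontr)
    assume no_common: "\<not> (\<exists>z\<in>V. E x z \<and> E z y)"
    define edge_to where "edge_to z = (if H x z then {x, z} else {y, z})" for z
    have "inj_on edge_to (V - {x, y})"
      unfolding edge_to_def inj_on_def by (auto split: if_splits simp: doubleton_eq_iff)
    moreover have "edge_to ` (V - {x, y}) \<subseteq> edge_set H - {{x, y}}"
    proof
      fix A assume "A \<in> edge_to ` (V - {x, y})"
      then obtain z where z: "z \<in> V - {x, y}" "A = edge_to z" by blast
      then have "H x z \<or> H y z"
        using no_common xy graph unfolding compl_graph_def simple_graph_def by blast
      then show "A \<in> edge_set H - {{x, y}}"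
        using z xy unfolding edge_to_def edge_set_def by (auto simp: doubleton_eq_iff)
    qed
    ultimately have "card (V - {x, y}) \<le> card (edge_set H - {{x, y}})"
      using card_inj_on_le finite_edge_set[OF simple_graph_compl[OF graph]] by blast
    moreover have "{x, y} \<in> edge_set H" using assms unfolding edge_set_def by blast
    ultimately show False
      using xy sparse six_vertices finite_V by (simp add: card_Diff_subset)
  qed
  then show thesis using that by blast
qed

lemma dist_compl:
  assumes "x \<in> V" "y \<in> V"
  shows "dist V E x y = (if x = y then 0 else if H x y then 2 else 1)"
proof -
  consider "x = y" | "x \<noteq> y" "H x y" | "x \<noteq> y" "E x y"
    using compl_graph_iff[OF graph assms] by blast
  then show ?thesis
  proof cases
    case 1
    then show ?thesis using dist_self[OF assms(1)] by simp
  next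
    case 2
    then obtain z where "z \<in> V" "E x z" "E z y" using compl_edge_common_neighbour by blast
    then show ?thesis
      using dist_two[OF assms] 2 compl_graph_iff[OF graph assms] by simp
  next
    case 3
    then show ?thesis using dist_adjacent[OF assms] compl_graph_iff[OF graph assms] by simp
  qed
qed

lemma resolving_set_iff: "resolving_set V E R \<longleftrightarrow> adj_resolving V H R"
proof -
  have "dist V E r x \<noteq> dist V E r y \<longleftrightarrow> r = x \<or> r = y \<or> H r x \<noteq> H r y"
    if "r \<in> V" "x \<in> V" "y \<in> V" "x \<noteq> y" for r x y
    using that dist_compl by auto
  then show ?thesis
    unfolding resolving_set_def adj_resolving_def by (meson subsetD)
qed

lemma basis_forced_P5_second:
  assumes "basis_forced V E v"
  shows "P5_second H v"
proof -
  have "resolving_set V E V" unfolding resolving_set_iff adj_resolving_def by blast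
  then obtain R where basis: "metric_basis V E R" using metric_basis_exists by blast
  interpret adj_forced V H R v
  proof
    show "simple_graph V H" by (rule simple_graph_compl[OF graph])
    show "card (edge_set H) \<le> 4" by (rule sparse)
    show "adj_resolving V H R"
      using basis resolving_set_iff unfolding metric_basis_def by blast
    show "v \<in> R" using assms basis unfolding basis_forced_def by blast
    show "\<not> adj_resolving V H (R - {v})"
      using basis_forced_delete[OF finite_V assms basis] resolving_set_iff by blast
    show "\<not> adj_resolving V H (insert u (R - {v}))" if "u \<in> V - R" for u
      using basis_forced_exchange[OF finite_V assms basis that] resolving_set_iff by blast
  qed
  show ?thesis by (rule P5_second_v)
qed

lemma basis_forced_compl_automorphism:
  assumes "bij_betw \<sigma> V V" "\<And>p q. p \<in> V \<Longrightarrow> q \<in> V \<Longrightarrow> H (\<sigma> p) (\<sigma> q) = H p q"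
    and "basis_forced V E x"
  shows "basis_forced V E (\<sigma> x)"
proof (rule basis_forced_image[OF assms(1) _ assms(3)])
  fix p q assume pq: "p \<in> V" "q \<in> V"
  then have "\<sigma> p \<in> V" "\<sigma> q \<in> V" "\<sigma> p = \<sigma> q \<longleftrightarrow> p = q"
    using assms(1) unfolding bij_betw_def inj_on_def by blast+
  then show "dist V E (\<sigma> p) (\<sigma> q) = dist V E p q"
    using dist_compl pq assms(2)[OF pq] by simp
qed

lemma card_basis_forced_eq_2:
  assumes "graph_iso V H {0..<card V} P5_plus_isolated" "basis_forced V E v"
  shows "card {v. basis_forced V E v} = 2"
proof -
  obtain f where f: "bij_betw f V {0..<card V}"
    and iso: "\<And>p q. p \<in> V \<Longrightarrow> q \<in> V \<Longrightarrow> H p q \<longleftrightarrow> P5_plus_isolated (f p) (f q)"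
    using assms(1) unfolding graph_iso_def by blast
  have inj: "inj_on f V" using f by (rule bij_betw_imp_inj_on)
  have label: "f x \<in> {1, 3}" if "basis_forced V E x" for x
    using P5_second_P5_plus_isolated[OF P5_second_transfer[OF simple_graph_compl[OF graph] inj iso
          basis_forced_P5_second[OF that]]] by blast
  obtain \<sigma> where bij: "bij_betw \<sigma> V V"
    and auto: "\<And>p q. p \<in> V \<Longrightarrow> q \<in> V \<Longrightarrow> H (\<sigma> p) (\<sigma> q) = H p q"
    and f_\<sigma>: "\<And>p. p \<in> V \<Longrightarrow> f (\<sigma> p) = P5_reflect (f p)"
    using P5_reflection_automorphism[OF f _ iso] six_vertices by auto
  have "basis_forced V E (\<sigma> v)"
    using basis_forced_compl_automorphism[OF bij auto assms(2)] .
  moreover have "\<sigma> v \<noteq> v"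
  proof
    assume "\<sigma> v = v"
    moreover have "v \<in> V" using assms(2) unfolding basis_forced_def by blast
    ultimately show False
      using f_\<sigma>[of v] label[OF assms(2)] unfolding P5_reflect_def by auto
  qed
  moreover have "finite {v. basis_forced V E v}"
    using finite_V by (rule finite_subset[rotated]) (auto simp: basis_forced_def)
  ultimately have "card {v, \<sigma> v} \<le> card {v. basis_forced V E v}"
    using assms(2) by (intro card_mono) auto
  moreover have "card {v. basis_forced V E v} \<le> card {1, 3 :: nat}"
  proof (rule card_inj_on_le)
    show "inj_on f {v. basis_forced V E v}"
      by (rule inj_on_subset[OF inj]) (auto simp: basis_forced_def)
    show "f ` {v. basis_forced V E v} \<subseteq> {1, 3}" using label by blast
  qed simp
  ultimately show ?thesis using \<open>\<sigma> v \<noteq> v\<close> by simp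
qed

end

lemma card_compl_edge_set_ge_4:
  assumes "simple_graph V E" "6 \<le> card V" "basis_forced V E v"
  shows "4 \<le> card (edge_set (compl_graph V E))"
proof (rule ccontr)
  assume few: "\<not> ?thesis"
  then interpret sparse_complement V E using assms(1,2) by unfold_locales auto
  show False
    using P5_second_card_edge_set[OF simple_graph_compl[OF graph] basis_forced_P5_second[OF assms(3)]]
      few by simp
qed

theorem theorem7:
  fixes V :: "'a set" and E :: "'a \<Rightarrow> 'a \<Rightarrow> bool"
  assumes "simple_graph V E" and "connected_graph V E"
    and "card V \<ge> 6"
    and "\<exists>v. basis_forced V E v"
  shows "card (edge_set E) \<le> card V * (card V - 1) div 2 - 4
    \<and> (card (edge_set E) = card V * (card V - 1) div 2 - 4 \<longrightarrow>
         graph_iso V (compl_graph V E) {0..<card V} P5_plus_isolated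
         \<and> card {v. basis_forced V E v} = 2)"
proof -
  let ?H = "compl_graph V E" and ?m = "card V * (card V - 1) div 2"
  have count: "card (edge_set E) + card (edge_set ?H) = ?m"
    by (rule card_edge_set_add_compl[OF assms(1)])
  obtain v where forced: "basis_forced V E v" using assms(4) by blast
  have four: "4 \<le> card (edge_set ?H)"
    by (rule card_compl_edge_set_ge_4[OF assms(1,3) forced])
  have "15 \<le> ?m"
  proof -
    have "6 * 5 \<le> card V * (card V - 1)" using assms(3) by (intro mult_le_mono) auto
    then show ?thesis by linarith
  qed
  show ?thesis
  proof (intro conjI impI)
    show "card (edge_set E) \<le> ?m - 4" using count four by linarith
    assume "card (edge_set E) = ?m - 4"
    then have "card (edge_set ?H) = 4" using count \<open>15 \<le> ?m\<close> by linarith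
    then interpret sparse_complement V E using assms(1,3) by unfold_locales auto
    show iso: "graph_iso V ?H {0..<card V} P5_plus_isolated"
      by (rule graph_iso_P5_plus_isolated[OF simple_graph_compl[OF graph] sparse
            basis_forced_P5_second[OF forced]])
    show "card {v. basis_forced V E v} = 2" by (rule card_basis_forced_eq_2[OF iso forced])
  qed
qed

end
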